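(* Let $T\in L_{aut}(\mathcal B)$ be generalized hyperbolic with splitting $\mathcal B=E^-\oplus E^+$, and let $x\in\mathcal B$ satisfy $T^kx=x$ for some integer $k\ge1$. Then there is $v\in T^k(E^-)\cap E^+$ such that $x=\sum_{n\in\mathbb Z}T^{nk}v$, the series converging absolutely.
   Context: $\mathcal B$ is a Banach space. $T$ is generalized hyperbolic if there is a decomposition $\mathcal B=E^-\oplus E^+$ into complementary closed subspaces with $T(E^+)\subset E^+$, $T^{-1}(E^-)\subset E^-$, and $T|_{E^+}$, $T^{-1}|_{E^-}$ uniform contractions (there are $C\ge1$, $\lambda\in(0,1)$ with $|T^nx|\le C\lambda^n|x|$ on $E^+$ and $|T^{-n}x|\le C\lambda^n|x|$ on $E^-$ for $n\ge0$). *)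

theory Defs
  imports "HOL-Analysis.Analysis"
begin

definition L_aut :: "('a::banach \<Rightarrow> 'a) \<Rightarrow> bool" where
  "L_aut T \<longleftrightarrow> bounded_linear T \<and> bij T \<and> bounded_linear (inv T)"

definition zpow :: "('a \<Rightarrow> 'a) \<Rightarrow> int \<Rightarrow> 'a \<Rightarrow> 'a" where
  "zpow T n = (if 0 \<le> n then T ^^ nat n else inv T ^^ nat (- n))"

definition gen_hyperbolic_splitting ::
    "('a::banach \<Rightarrow> 'a) \<Rightarrow> 'a set \<Rightarrow> 'a set \<Rightarrow> bool" where
  "gen_hyperbolic_splitting T Em Ep \<longleftrightarrow>
     subspace Em \<and> subspace Ep \<and> closed Em \<and> closed Ep \<and>
     Em \<inter> Ep = {0} \<and> (\<forall>z. \<exists>a\<in>Em. \<exists>b\<in>Ep. z = a + b) \<and>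
     T ` Ep \<subseteq> Ep \<and> inv T ` Em \<subseteq> Em \<and>
     (\<exists>C lam. C \<ge> 1 \<and> 0 < lam \<and> lam < 1 \<and>
        (\<forall>n. \<forall>z\<in>Ep. norm ((T ^^ n) z) \<le> C * lam ^ n * norm z) \<and>
        (\<forall>n. \<forall>z\<in>Em. norm ((inv T ^^ n) z) \<le> C * lam ^ n * norm z))"

definition gen_hyperbolic :: "('a::banach \<Rightarrow> 'a) \<Rightarrow> bool" where
  "gen_hyperbolic T \<longleftrightarrow> (\<exists>Em Ep. gen_hyperbolic_splitting T Em Ep)"

end

theory Submission
  imports Defs
begin

text \<open>Write x = a + b with a \<in> E- and b \<in> E+, and put S = T^k. Since S x = x, the vector
  v = b - S b = S a - a lies in E+ \<inter> S(E-). Its forward orbit sum telescopes,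
  \<Sum>(j \<ge> 0) S^j v = b, because S^j b decays geometrically; its backward orbit sum
  \<Sum>(j \<ge> 1) S^-j v = \<Sum>(j \<ge> 0) S^-j (a - S^-1 a) telescopes to a, because S^-j a decays
  geometrically. The same geometric bounds give absolute convergence.\<close>

lemma linear_funpow: "linear (f :: 'a::real_vector \<Rightarrow> 'a) \<Longrightarrow> linear (f ^^ n)"
proof (induction n)
  case 0
  then show ?case by (simp add: linear_id[unfolded id_def])
next
  case (Suc n)
  then show ?case using linear_compose[of "f ^^ n" f] by (simp add: o_def)
qed

lemma funpow_in_invariant: "f ` A \<subseteq> A \<Longrightarrow> y \<in> A \<Longrightarrow> (f ^^ n) y \<in> A"
  by (induction n) auto

lemma funpow_left_inverse:
  fixes f g :: "'a \<Rightarrow> 'a"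
  assumes "\<And>y. g (f y) = y"
  shows "(g ^^ n) ((f ^^ n) y) = y"
proof (induction n arbitrary: y)
  case (Suc n)
  have "(g ^^ Suc n) ((f ^^ Suc n) y) = (g ^^ n) (g (f ((f ^^ n) y)))"
    by (simp only: funpow.simps(2) o_apply funpow_swap1[of g])
  then show ?case using assms Suc by simp
qed simp

lemma zpow_of_nat_mult: "zpow T (int j * int k) = (T ^^ k) ^^ j"
  by (simp add: zpow_def funpow_mult nat_mult_distrib mult.commute)

lemma zpow_neg_of_nat_mult: "zpow T (- int j * int k) = (inv T ^^ k) ^^ j"
  by (cases "j * k = 0")
    (auto simp: zpow_def funpow_mult nat_mult_distrib mult.commute mult_le_0_iff)

lemma telescoping_sums_of_geometric_decay:
  fixes S :: "'a::real_normed_vector \<Rightarrow> 'a"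
  assumes "linear S" and "0 \<le> q" and "q < 1"
    and decay: "\<And>j. norm ((S ^^ j) z) \<le> M * q ^ j"
  shows "summable (\<lambda>j. norm ((S ^^ j) (z - S z)))" and "(\<lambda>j. (S ^^ j) (z - S z)) sums z"
proof -
  have step: "(S ^^ j) (z - S z) = (S ^^ j) z - (S ^^ Suc j) z" for j
    using linear_diff[OF linear_funpow[OF \<open>linear S\<close>]] by (simp add: funpow_Suc_right funpow_swap1)
  have geometric: "summable (\<lambda>j. D * q ^ j)" for D
    using assms(2,3) by (intro summable_mult summable_geometric) simp
  have "(\<lambda>j. M * q ^ j) \<longlonglongrightarrow> 0"
    by (intro tendsto_mult_right_zero LIMSEQ_power_zero) (use assms(2,3) in simp)
  then have "(\<lambda>j. (S ^^ j) z) \<longlonglongrightarrow> 0"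
    by (rule Lim_null_comparison[rotated]) (simp add: decay always_eventually)
  then show "(\<lambda>j. (S ^^ j) (z - S z)) sums z"
    unfolding step using telescope_sums'[OF \<open>(\<lambda>j. (S ^^ j) z) \<longlonglongrightarrow> 0\<close>] by simp
  have "norm ((S ^^ j) (z - S z)) \<le> (2 * M) * q ^ j" for j
  proof -
    have "norm ((S ^^ j) (z - S z)) \<le> norm ((S ^^ j) z) + norm ((S ^^ Suc j) z)"
      unfolding step by (rule norm_triangle_ineq4)
    also have "\<dots> \<le> M * q ^ j + M * q ^ Suc j"
      by (intro add_mono decay)
    also have "\<dots> \<le> (2 * M) * q ^ j"
    proof -
      have "0 \<le> M"
        using order_trans[OF norm_ge_zero decay[of 0]] by simp
      then have "M * q ^ Suc j \<le> M * q ^ j"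
        using power_decreasing[of j "Suc j" q] assms(2,3) by (intro mult_left_mono) auto
      then show ?thesis by simp
    qed
    finally show ?thesis .
  qed
  then show "summable (\<lambda>j. norm ((S ^^ j) (z - S z)))"
    by (intro summable_comparison_test'[OF geometric]) auto
qed

lemma telescoping_sums_of_funpow_decay:
  fixes f :: "'a::real_normed_vector \<Rightarrow> 'a"
  assumes "linear f" and "0 \<le> lam" and "lam < 1" and "k \<ge> 1"
    and decay: "\<And>n. norm ((f ^^ n) z) \<le> C * lam ^ n * norm z"
  shows "summable (\<lambda>j. norm (((f ^^ k) ^^ j) (z - (f ^^ k) z)))"
    and "(\<lambda>j. ((f ^^ k) ^^ j) (z - (f ^^ k) z)) sums z"
proof -
  have "0 \<le> lam ^ k" and "lam ^ k < 1"
    using assms(2,3,4) by (simp_all add: power_less_one_iff)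
  moreover have "norm (((f ^^ k) ^^ j) z) \<le> (C * norm z) * (lam ^ k) ^ j" for j
    using decay[of "k * j"] unfolding funpow_mult power_mult by (simp add: mult_ac)
  ultimately show "summable (\<lambda>j. norm (((f ^^ k) ^^ j) (z - (f ^^ k) z)))"
    and "(\<lambda>j. ((f ^^ k) ^^ j) (z - (f ^^ k) z)) sums z"
    using telescoping_sums_of_geometric_decay[OF linear_funpow[OF \<open>linear f\<close>]] by blast+
qed

lemma has_sum_int_split:
  fixes F :: "int \<Rightarrow> 'b::banach"
  assumes "summable (\<lambda>n. norm (F (int n)))" "(\<lambda>n. F (int n)) sums s1"
    and "summable (\<lambda>m. norm (F (- int (Suc m))))" "(\<lambda>m. F (- int (Suc m))) sums s2"
  shows "(F has_sum (s1 + s2)) UNIV"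
proof -
  have nonneg: "(F has_sum s1) (range int)"
    using norm_summable_imp_has_sum[OF assms(1,2)] by (subst has_sum_reindex) (auto simp: o_def)
  have "inj (\<lambda>m::nat. - int (Suc m))"
    by (auto simp: inj_def)
  then have neg: "(F has_sum s2) (range (\<lambda>m::nat. - int (Suc m)))"
    using norm_summable_imp_has_sum[OF assms(3,4)] by (subst has_sum_reindex) (auto simp: o_def)
  have "n \<in> range int \<union> range (\<lambda>m::nat. - int (Suc m))" for n :: int
  proof (cases "0 \<le> n")
    case True
    then have "n = int (nat n)" by simp
    then show ?thesis by blast
  next
    case False
    then have "n = - int (Suc (nat (- n - 1)))" by simp
    then show ?thesis by blast
  qed
  then have "range int \<union> range (\<lambda>m::nat. - int (Suc m)) = UNIV"
    by blast
  moreover have "range int \<inter> range (\<lambda>m::nat. - int (Suc m)) = {}"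
    by auto
  ultimately show ?thesis
    using has_sum_Un_disjoint[OF nonneg neg] by simp
qed

lemma abs_summable_on_int_split:
  fixes F :: "int \<Rightarrow> 'b::real_normed_vector"
  assumes "summable (\<lambda>n. norm (F (int n)))" and "summable (\<lambda>m. norm (F (- int (Suc m))))"
  shows "(\<lambda>n. norm (F n)) summable_on UNIV"
  using has_sum_int_split[of "\<lambda>n. norm (F n)", OF _ summable_sums[OF assms(1)]
      _ summable_sums[OF assms(2)]] assms
  by (auto intro: has_sum_imp_summable)

lemma L_autD:
  assumes "L_aut T"
  shows "linear T" and "linear (inv T)" and "inv T (T y) = y" and "T (inv T y) = y"
  using assms unfolding L_aut_def
  by (simp_all add: bounded_linear.linear bij_is_inj bij_is_surj surj_f_inv_f)

lemma gen_hyperbolic_splitting_decayE: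
  assumes "gen_hyperbolic_splitting T Em Ep"
  obtains lam C where "0 \<le> lam" and "lam < 1"
    and "\<And>n z. z \<in> Ep \<Longrightarrow> norm ((T ^^ n) z) \<le> C * lam ^ n * norm z"
    and "\<And>n z. z \<in> Em \<Longrightarrow> norm ((inv T ^^ n) z) \<le> C * lam ^ n * norm z"
proof -
  obtain C lam where "0 < lam" "lam < 1"
    "\<forall>n. \<forall>z\<in>Ep. norm ((T ^^ n) z) \<le> C * lam ^ n * norm z"
    "\<forall>n. \<forall>z\<in>Em. norm ((inv T ^^ n) z) \<le> C * lam ^ n * norm z"
    using assms unfolding gen_hyperbolic_splitting_def by (elim conjE exE) auto
  then show thesis
    using that less_imp_le by blast
qed

lemma gen_hyperbolic_splitting_decompose:
  "gen_hyperbolic_splitting T Em Ep \<Longrightarrow> \<exists>a\<in>Em. \<exists>b\<in>Ep. x = a + b"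
  by (simp add: gen_hyperbolic_splitting_def)

lemma gen_hyperbolic_splitting_diff_funpow_mem:
  assumes "gen_hyperbolic_splitting T Em Ep"
  shows "b \<in> Ep \<Longrightarrow> b - (T ^^ k) b \<in> Ep" and "a \<in> Em \<Longrightarrow> a - (inv T ^^ k) a \<in> Em"
  using assms unfolding gen_hyperbolic_splitting_def
  by (simp_all add: subspace_diff funpow_in_invariant)

lemma fixed_point_split_diff:
  assumes "linear S" and "\<And>y. R (S y) = y" and "\<And>y. S (R y) = y" and "S (a + b) = a + b"
  shows "b - S b = S (a - R a)" and "R (b - S b) = a - R a"
proof -
  have "S a + S b = a + b"
    using assms(4) linear_add[OF assms(1)] by simp
  moreover have "S (a - R a) = S a - a"
    using linear_diff[OF assms(1)] assms(3) by simp
  ultimately show "b - S b = S (a - R a)"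
    by (metis add_diff_cancel_left add_diff_cancel_right diff_diff_eq2)
  then show "R (b - S b) = a - R a"
    using assms(2) by simp
qed

theorem mainTheorem19:
  fixes T :: "'a::banach \<Rightarrow> 'a" and Em Ep :: "'a set" and x :: 'a and k :: nat
  assumes "L_aut T"
    and "gen_hyperbolic_splitting T Em Ep"
    and "k \<ge> 1"
    and "(T ^^ k) x = x"
  shows "\<exists>v \<in> (T ^^ k) ` Em \<inter> Ep.
           (\<lambda>n::int. norm (zpow T (n * int k) v)) summable_on UNIV \<and>
           ((\<lambda>n::int. zpow T (n * int k) v) has_sum x) UNIV"
proof -
  obtain lam C where "0 \<le> lam" "lam < 1"
    and decay_Ep: "\<And>n z. z \<in> Ep \<Longrightarrow> norm ((T ^^ n) z) \<le> C * lam ^ n * norm z"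
    and decay_Em: "\<And>n z. z \<in> Em \<Longrightarrow> norm ((inv T ^^ n) z) \<le> C * lam ^ n * norm z"
    using gen_hyperbolic_splitting_decayE[OF assms(2)] by blast
  obtain a b where "a \<in> Em" "b \<in> Ep" "x = a + b"
    using gen_hyperbolic_splitting_decompose[OF assms(2)] by blast
  define S R where "S = T ^^ k" and "R = inv T ^^ k"
  have "linear S"
    unfolding S_def using L_autD(1)[OF assms(1)] by (rule linear_funpow)
  have RS: "R (S y) = y" and SR: "S (R y) = y" for y
    unfolding S_def R_def using L_autD(3,4)[OF assms(1)]
    by (simp_all add: funpow_left_inverse)
  note fwd = telescoping_sums_of_funpow_decay[OF L_autD(1)[OF assms(1)] \<open>0 \<le> lam\<close> \<open>lam < 1\<close>
      assms(3) decay_Ep[OF \<open>b \<in> Ep\<close>], folded S_def]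
  note bwd = telescoping_sums_of_funpow_decay[OF L_autD(2)[OF assms(1)] \<open>0 \<le> lam\<close> \<open>lam < 1\<close>
      assms(3) decay_Em[OF \<open>a \<in> Em\<close>], folded R_def]
  define v where "v = b - S b"
  have v_eq: "v = S (a - R a)" and Rv: "R v = a - R a"
    unfolding v_def using fixed_point_split_diff[OF \<open>linear S\<close> RS SR] assms(4)
    unfolding S_def \<open>x = a + b\<close> by simp_all
  have "v \<in> Ep"
    unfolding v_def S_def
    using gen_hyperbolic_splitting_diff_funpow_mem(1)[OF assms(2) \<open>b \<in> Ep\<close>] .
  have "v \<in> S ` Em"
    unfolding v_eq R_def
    using gen_hyperbolic_splitting_diff_funpow_mem(2)[OF assms(2) \<open>a \<in> Em\<close>] by blast
  have nonneg_terms: "zpow T (int j * int k) v = (S ^^ j) (b - S b)" for j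
    unfolding zpow_of_nat_mult S_def v_def ..
  have neg_terms: "zpow T (- int (Suc j) * int k) v = (R ^^ j) (a - R a)" for j
    unfolding zpow_neg_of_nat_mult R_def[symmetric] funpow_Suc_right o_apply Rv ..
  have "(\<lambda>n::int. norm (zpow T (n * int k) v)) summable_on UNIV"
    by (rule abs_summable_on_int_split) (simp_all only: nonneg_terms neg_terms fwd bwd)
  moreover have "((\<lambda>n::int. zpow T (n * int k) v) has_sum (b + a)) UNIV"
    by (rule has_sum_int_split) (simp_all only: nonneg_terms neg_terms fwd bwd)
  ultimately show ?thesis
    using \<open>v \<in> Ep\<close> \<open>v \<in> S ` Em\<close> unfolding S_def \<open>x = a + b\<close> add.commute[of a b] by blast
qed

end
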